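(* Let $\mathbb{E}$ be a regular category, $\Sigma$ a fibrational class of split epimorphisms, and suppose $\mathbb{E}$ is a $\Sigma$-Mal'tsev category. Let $(f,s)\colon X\rightleftarrows Y$ and $(f',s')\colon X'\rightleftarrows Y'$ be split epimorphisms and $x\colon X\to X'$, $y\colon Y\to Y'$ regular epimorphisms with $f'x=yf$ and $xs=s'y$. If $(f,s)\in\Sigma$, then the square $f'x=yf$ is a regular pushout, i.e. the induced morphism $(f,x)\colon X\to Y\times_{Y'}X'$ into the pullback of $f'$ along $y$ is a regular epimorphism.
   Context: A split epimorphism is a pair $(f,s)$ with $fs=1$. A class $\Sigma$ of split epimorphisms is fibrational if it contains all split epimorphisms $(f,s)$ with $f$ invertible and is stable under pullback along any morphism. A pair of morphisms with common codomain $Z$ is jointly extremally epic if it factors jointly through no non-invertible monomorphism into $Z$. $\mathbb{E}$ is $\Sigma$-Mal'tsev if for every split epimorphism $(f,s)\colon X\rightleftarrows Y$ in $\Sigma$ and every split epimorphism $(g,t)$ with $g\colon Y'\to Y$, letting $X'=Y'\times_YX$, $s'=(1_{Y'},sg)$, $\bar t=(tf,1_X)$, the pair $(s',\bar t)$ is jointly extremally epic. *)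

theory Defs
  imports Main
begin

record ('o, 'a) cat =
  Ob   :: "'o set"
  Ar   :: "'a set"
  Dom  :: "'a \<Rightarrow> 'o"
  Cod  :: "'a \<Rightarrow> 'o"
  Idt  :: "'o \<Rightarrow> 'a"
  Comp :: "'a \<Rightarrow> 'a \<Rightarrow> 'a"   (* Comp C g f = g \<circ> f, defined when Cod f = Dom g *)

definition hom :: "('o, 'a) cat \<Rightarrow> 'o \<Rightarrow> 'o \<Rightarrow> 'a set" where
  "hom C a b = {f \<in> Ar C. Dom C f = a \<and> Cod C f = b}"

definition category :: "('o, 'a) cat \<Rightarrow> bool" where
  "category C \<longleftrightarrow>
     (\<forall>f \<in> Ar C. Dom C f \<in> Ob C \<and> Cod C f \<in> Ob C) \<and>
     (\<forall>a \<in> Ob C. Idt C a \<in> hom C a a) \<and>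
     (\<forall>f \<in> Ar C. \<forall>g \<in> Ar C. Cod C f = Dom C g \<longrightarrow>
         Comp C g f \<in> hom C (Dom C f) (Cod C g)) \<and>
     (\<forall>f \<in> Ar C. \<forall>g \<in> Ar C. \<forall>h \<in> Ar C. Cod C f = Dom C g \<longrightarrow> Cod C g = Dom C h \<longrightarrow>
         Comp C h (Comp C g f) = Comp C (Comp C h g) f) \<and>
     (\<forall>f \<in> Ar C. Comp C f (Idt C (Dom C f)) = f \<and> Comp C (Idt C (Cod C f)) f = f)"

definition iso :: "('o, 'a) cat \<Rightarrow> 'a \<Rightarrow> bool" where
  "iso C f \<longleftrightarrow> f \<in> Ar C \<and>
     (\<exists>g \<in> hom C (Cod C f) (Dom C f).
        Comp C g f = Idt C (Dom C f) \<and> Comp C f g = Idt C (Cod C f))"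

definition mono :: "('o, 'a) cat \<Rightarrow> 'a \<Rightarrow> bool" where
  "mono C m \<longleftrightarrow> m \<in> Ar C \<and>
     (\<forall>g \<in> Ar C. \<forall>h \<in> Ar C. Dom C g = Dom C h \<longrightarrow> Cod C g = Dom C m \<longrightarrow> Cod C h = Dom C m \<longrightarrow>
        Comp C m g = Comp C m h \<longrightarrow> g = h)"

definition terminal :: "('o, 'a) cat \<Rightarrow> 'o \<Rightarrow> bool" where
  "terminal C t \<longleftrightarrow> t \<in> Ob C \<and> (\<forall>a \<in> Ob C. \<exists>!f. f \<in> hom C a t)"

definition is_pullback :: "('o, 'a) cat \<Rightarrow> 'a \<Rightarrow> 'a \<Rightarrow> 'a \<Rightarrow> 'a \<Rightarrow> bool" where
  "is_pullback C f g p1 p2 \<longleftrightarrow>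
     f \<in> Ar C \<and> g \<in> Ar C \<and> p1 \<in> Ar C \<and> p2 \<in> Ar C \<and>
     Cod C f = Cod C g \<and> Dom C p1 = Dom C p2 \<and>
     Cod C p1 = Dom C f \<and> Cod C p2 = Dom C g \<and>
     Comp C f p1 = Comp C g p2 \<and>
     (\<forall>W \<in> Ob C. \<forall>a \<in> hom C W (Dom C f). \<forall>b \<in> hom C W (Dom C g).
        Comp C f a = Comp C g b \<longrightarrow>
        (\<exists>!u. u \<in> hom C W (Dom C p1) \<and> Comp C p1 u = a \<and> Comp C p2 u = b))"

definition has_pullbacks :: "('o, 'a) cat \<Rightarrow> bool" where
  "has_pullbacks C \<longleftrightarrow>
     (\<forall>f \<in> Ar C. \<forall>g \<in> Ar C. Cod C f = Cod C g \<longrightarrow> (\<exists>p1 p2. is_pullback C f g p1 p2))"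

definition finitely_complete :: "('o, 'a) cat \<Rightarrow> bool" where
  "finitely_complete C \<longleftrightarrow> (\<exists>t. terminal C t) \<and> has_pullbacks C"

definition is_coequalizer :: "('o, 'a) cat \<Rightarrow> 'a \<Rightarrow> 'a \<Rightarrow> 'a \<Rightarrow> bool" where
  "is_coequalizer C u v q \<longleftrightarrow>
     u \<in> Ar C \<and> v \<in> Ar C \<and> q \<in> Ar C \<and>
     Dom C u = Dom C v \<and> Cod C u = Cod C v \<and> Dom C q = Cod C u \<and>
     Comp C q u = Comp C q v \<and>
     (\<forall>h \<in> Ar C. Dom C h = Cod C u \<longrightarrow> Comp C h u = Comp C h v \<longrightarrow>
        (\<exists>!k. k \<in> hom C (Cod C q) (Cod C h) \<and> Comp C k q = h))"

definition regular_epi :: "('o, 'a) cat \<Rightarrow> 'a \<Rightarrow> bool" where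
  "regular_epi C q \<longleftrightarrow> (\<exists>u v. is_coequalizer C u v q)"

definition regular_category :: "('o, 'a) cat \<Rightarrow> bool" where
  "regular_category C \<longleftrightarrow> category C \<and> finitely_complete C \<and>
     (\<forall>f \<in> Ar C. \<forall>k1 k2. is_pullback C f f k1 k2 \<longrightarrow> (\<exists>q. is_coequalizer C k1 k2 q)) \<and>
     (\<forall>f g p1 p2. is_pullback C f g p1 p2 \<longrightarrow> regular_epi C g \<longrightarrow> regular_epi C p1)"

definition split_epi :: "('o, 'a) cat \<Rightarrow> 'a \<Rightarrow> 'a \<Rightarrow> 'o \<Rightarrow> 'o \<Rightarrow> bool" where
  "split_epi C f s X Y \<longleftrightarrow> f \<in> hom C X Y \<and> s \<in> hom C Y X \<and> Comp C f s = Idt C Y"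

definition fibrational :: "('o, 'a) cat \<Rightarrow> ('a \<times> 'a) set \<Rightarrow> bool" where
  "fibrational C \<Sigma> \<longleftrightarrow>
     (\<forall>(f, s) \<in> \<Sigma>. \<exists>X Y. split_epi C f s X Y) \<and>
     (\<forall>f s X Y. split_epi C f s X Y \<longrightarrow> iso C f \<longrightarrow> (f, s) \<in> \<Sigma>) \<and>
     (\<forall>f s X Y g p1 p2 s'. (f, s) \<in> \<Sigma> \<longrightarrow> split_epi C f s X Y \<longrightarrow>
        g \<in> Ar C \<longrightarrow> Cod C g = Y \<longrightarrow> is_pullback C g f p1 p2 \<longrightarrow>
        s' \<in> hom C (Dom C g) (Dom C p1) \<longrightarrow>
        Comp C p1 s' = Idt C (Dom C g) \<longrightarrow> Comp C p2 s' = Comp C s g \<longrightarrow>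
        (p1, s') \<in> \<Sigma>)"

definition jointly_extremally_epic :: "('o, 'a) cat \<Rightarrow> 'a \<Rightarrow> 'a \<Rightarrow> bool" where
  "jointly_extremally_epic C a b \<longleftrightarrow>
     a \<in> Ar C \<and> b \<in> Ar C \<and> Cod C a = Cod C b \<and>
     (\<forall>m. mono C m \<longrightarrow> Cod C m = Cod C a \<longrightarrow>
        (\<exists>a' \<in> hom C (Dom C a) (Dom C m). \<exists>b' \<in> hom C (Dom C b) (Dom C m).
            Comp C m a' = a \<and> Comp C m b' = b) \<longrightarrow> iso C m)"

definition sigma_maltsev :: "('o, 'a) cat \<Rightarrow> ('a \<times> 'a) set \<Rightarrow> bool" where
  "sigma_maltsev C \<Sigma> \<longleftrightarrow>
     (\<forall>f s X Y g t Y' p1 p2 s' tb.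
        (f, s) \<in> \<Sigma> \<longrightarrow> split_epi C f s X Y \<longrightarrow> split_epi C g t Y' Y \<longrightarrow>
        is_pullback C g f p1 p2 \<longrightarrow>
        s' \<in> hom C Y' (Dom C p1) \<longrightarrow> Comp C p1 s' = Idt C Y' \<longrightarrow> Comp C p2 s' = Comp C s g \<longrightarrow>
        tb \<in> hom C X (Dom C p1) \<longrightarrow> Comp C p1 tb = Comp C t f \<longrightarrow> Comp C p2 tb = Idt C X \<longrightarrow>
        jointly_extremally_epic C s' tb)"

end

theory Submission
  imports Defs
begin

text \<open>Write \<open>P = Y \<times>\<^bsub>Y'\<^esub> X'\<close> and \<open>u = (f, x) : X \<rightarrow> P\<close>, and factor \<open>u\<close> as a regular epimorphism
  followed by a monomorphism \<open>m\<close>; it suffices to show that \<open>m\<close> is invertible. Pulling the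
  regular epimorphism \<open>x\<close> back along \<open>P \<rightarrow> X'\<close> gives a regular epimorphism \<open>q : Q \<rightarrow> P\<close>, and
  pasting pullbacks identifies \<open>Q\<close> with the pullback of \<open>f\<close> along the second projection
  \<open>r\<^sub>2\<close> of the kernel pair \<open>R\<close> of \<open>y\<close>. The diagonal splits \<open>r\<^sub>2\<close>, so \<open>\<Sigma>\<close>-Mal'tsev makes the
  canonical sections \<open>\<sigma> : R \<rightarrow> Q\<close> and \<open>\<tau> : X \<rightarrow> Q\<close> jointly extremally epic. Since
  \<open>q \<sigma> = u s r\<^sub>1\<close> and \<open>q \<tau> = u\<close> both factor through \<open>m\<close>, the pullback of \<open>m\<close> along \<open>q\<close> is
  invertible, so \<open>q\<close> factors through \<open>m\<close>, and \<open>m\<close> is invertible because \<open>q\<close> is a regular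
  epimorphism.\<close>

locale elementary_category =
  fixes C :: "('o, 'a) cat"
  assumes category: "category C"
begin

abbreviation arr_comp :: "'a \<Rightarrow> 'a \<Rightarrow> 'a"  (infixr "\<cdot>" 55)
  where "g \<cdot> f \<equiv> Comp C g f"

lemma hom_objects: "f \<in> hom C a b \<Longrightarrow> a \<in> Ob C \<and> b \<in> Ob C"
  using category unfolding category_def hom_def by auto

lemma comp_hom: "f \<in> hom C a b \<Longrightarrow> g \<in> hom C b c \<Longrightarrow> g \<cdot> f \<in> hom C a c"
  using category unfolding category_def hom_def by auto

lemma comp_assoc:
  "f \<in> hom C a b \<Longrightarrow> g \<in> hom C b c \<Longrightarrow> h \<in> hom C c d \<Longrightarrow> h \<cdot> (g \<cdot> f) = (h \<cdot> g) \<cdot> f"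
  using category unfolding category_def hom_def by auto

lemma comp_id_right: "f \<in> hom C a b \<Longrightarrow> f \<cdot> Idt C a = f"
  using category unfolding category_def hom_def by auto

lemma comp_id_left: "f \<in> hom C a b \<Longrightarrow> Idt C b \<cdot> f = f"
  using category unfolding category_def hom_def by auto

lemma id_hom: "a \<in> Ob C \<Longrightarrow> Idt C a \<in> hom C a a"
  using category unfolding category_def by auto

lemma pullback_proj_homs:
  assumes "is_pullback C f g p1 p2" "f \<in> hom C A Z" "g \<in> hom C B Z'"
  shows "p1 \<in> hom C (Dom C p1) A" "p2 \<in> hom C (Dom C p1) B"
  using assms unfolding is_pullback_def hom_def by auto

lemma pullback_commutes: "is_pullback C f g p1 p2 \<Longrightarrow> f \<cdot> p1 = g \<cdot> p2"
  unfolding is_pullback_def by simp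

lemma pullback_lift:
  assumes pb: "is_pullback C f g p1 p2" and "f \<in> hom C A Z" "g \<in> hom C B Z'"
    and "a \<in> hom C W A" "b \<in> hom C W B" "f \<cdot> a = g \<cdot> b"
  obtains w where "w \<in> hom C W (Dom C p1)" "p1 \<cdot> w = a" "p2 \<cdot> w = b"
proof -
  have "a \<in> hom C W (Dom C f)" "b \<in> hom C W (Dom C g)" using assms(2-5) by (auto simp: hom_def)
  then show thesis using that pb assms(6) hom_objects unfolding is_pullback_def by metis
qed

lemma pullback_lift_unique:
  assumes pb: "is_pullback C f g p1 p2"
    and w: "w \<in> hom C W (Dom C p1)" and w': "w' \<in> hom C W (Dom C p1)"
    and "p1 \<cdot> w = p1 \<cdot> w'" "p2 \<cdot> w = p2 \<cdot> w'"
  shows "w = w'"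
proof -
  have homs: "f \<in> hom C (Dom C f) (Cod C f)" "g \<in> hom C (Dom C g) (Cod C f)"
    "p1 \<in> hom C (Dom C p1) (Dom C f)" "p2 \<in> hom C (Dom C p1) (Dom C g)"
    using pb unfolding is_pullback_def hom_def by auto
  have "f \<cdot> (p1 \<cdot> w) = g \<cdot> (p2 \<cdot> w)"
    using comp_assoc[OF w homs(3,1)] comp_assoc[OF w homs(4,2)] pullback_commutes[OF pb] by simp
  moreover have "p1 \<cdot> w \<in> hom C W (Dom C f)" "p2 \<cdot> w \<in> hom C W (Dom C g)"
    using comp_hom[OF w homs(3)] comp_hom[OF w homs(4)] .
  ultimately have "\<exists>!u. u \<in> hom C W (Dom C p1) \<and> p1 \<cdot> u = p1 \<cdot> w \<and> p2 \<cdot> u = p2 \<cdot> w"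
    using pb hom_objects[OF w] unfolding is_pullback_def by blast
  then show ?thesis using w w' assms(4,5) by metis
qed

lemma is_pullbackI:
  assumes f: "f \<in> hom C A Z" and g: "g \<in> hom C B Z"
    and p1: "p1 \<in> hom C P A" and p2: "p2 \<in> hom C P B" and "f \<cdot> p1 = g \<cdot> p2"
    and lift: "\<And>W a b. a \<in> hom C W A \<Longrightarrow> b \<in> hom C W B \<Longrightarrow> f \<cdot> a = g \<cdot> b \<Longrightarrow>
      \<exists>w \<in> hom C W P. p1 \<cdot> w = a \<and> p2 \<cdot> w = b"
    and unique: "\<And>W w w'. w \<in> hom C W P \<Longrightarrow> w' \<in> hom C W P \<Longrightarrow>
      p1 \<cdot> w = p1 \<cdot> w' \<Longrightarrow> p2 \<cdot> w = p2 \<cdot> w' \<Longrightarrow> w = w'"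
  shows "is_pullback C f g p1 p2"
  unfolding is_pullback_def
proof (intro conjI ballI impI)
  fix W a b assume "a \<in> hom C W (Dom C f)" "b \<in> hom C W (Dom C g)" "f \<cdot> a = g \<cdot> b"
  then obtain w where "w \<in> hom C W P" "p1 \<cdot> w = a" "p2 \<cdot> w = b"
    using lift f g by (auto simp: hom_def)
  then show "\<exists>!u. u \<in> hom C W (Dom C p1) \<and> p1 \<cdot> u = a \<and> p2 \<cdot> u = b"
    using unique p1 by (auto simp: hom_def)
qed (use assms in \<open>auto simp: hom_def\<close>)

lemma pullback_paste:
  assumes right: "is_pullback C g h a b" and left: "is_pullback C b k c d"
    and g: "g \<in> hom C B Z" and h: "h \<in> hom C D Z" and k: "k \<in> hom C E D"
  shows "is_pullback C g (h \<cdot> k) (a \<cdot> c) d"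
proof -
  define P Q where "P = Dom C a" and "Q = Dom C c"
  have a: "a \<in> hom C P B" and b: "b \<in> hom C P D"
    using pullback_proj_homs[OF right g h] P_def by auto
  have c: "c \<in> hom C Q P" and d: "d \<in> hom C Q E"
    using pullback_proj_homs[OF left b k] Q_def by auto
  show ?thesis
  proof (rule is_pullbackI[OF g comp_hom[OF k h] comp_hom[OF c a] d])
    show "g \<cdot> (a \<cdot> c) = (h \<cdot> k) \<cdot> d"
      using comp_assoc[OF c a g] comp_assoc[OF c b h] comp_assoc[OF d k h]
        pullback_commutes[OF right] pullback_commutes[OF left] by simp
  next
    fix W \<alpha> \<beta> assume \<alpha>: "\<alpha> \<in> hom C W B" and \<beta>: "\<beta> \<in> hom C W E"
      and eq: "g \<cdot> \<alpha> = (h \<cdot> k) \<cdot> \<beta>"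
    obtain w1 where w1: "w1 \<in> hom C W P" "a \<cdot> w1 = \<alpha>" "b \<cdot> w1 = k \<cdot> \<beta>"
      using pullback_lift[OF right g h \<alpha> comp_hom[OF \<beta> k]] eq comp_assoc[OF \<beta> k h] P_def
      by auto
    obtain w where w: "w \<in> hom C W Q" "c \<cdot> w = w1" "d \<cdot> w = \<beta>"
      using pullback_lift[OF left b k w1(1) \<beta>] w1(3) Q_def by auto
    show "\<exists>w \<in> hom C W Q. (a \<cdot> c) \<cdot> w = \<alpha> \<and> d \<cdot> w = \<beta>"
      using w w1 comp_assoc[OF w(1) c a] by auto
  next
    fix W w w' assume w: "w \<in> hom C W Q" and w': "w' \<in> hom C W Q"
      and eq1: "(a \<cdot> c) \<cdot> w = (a \<cdot> c) \<cdot> w'" and eq2: "d \<cdot> w = d \<cdot> w'"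
    have "b \<cdot> (c \<cdot> w) = b \<cdot> (c \<cdot> w')"
      using comp_assoc[OF w c b] comp_assoc[OF w' c b] comp_assoc[OF w d k] comp_assoc[OF w' d k]
        pullback_commutes[OF left] eq2 by simp
    then have "c \<cdot> w = c \<cdot> w'"
      using pullback_lift_unique[OF right, of "c \<cdot> w" W "c \<cdot> w'"] comp_hom[OF w c] comp_hom[OF w' c]
        comp_assoc[OF w c a] comp_assoc[OF w' c a] eq1 P_def by simp
    then show "w = w'"
      using pullback_lift_unique[OF left w[unfolded Q_def] w'[unfolded Q_def]] eq2 by simp
  qed
qed

lemma pullback_cancel:
  assumes right: "is_pullback C g h a b" and outer: "is_pullback C g (h \<cdot> k) e d"
    and g: "g \<in> hom C B Z" and h: "h \<in> hom C D Z" and k: "k \<in> hom C E D"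
    and c: "c \<in> hom C (Dom C e) (Dom C a)" and ac: "a \<cdot> c = e" and bc: "b \<cdot> c = k \<cdot> d"
  shows "is_pullback C b k c d"
proof -
  define P Q where "P = Dom C a" and "Q = Dom C e"
  have a: "a \<in> hom C P B" and b: "b \<in> hom C P D"
    using pullback_proj_homs[OF right g h] P_def by auto
  have d: "d \<in> hom C Q E"
    using pullback_proj_homs(2)[OF outer g comp_hom[OF k h]] Q_def by auto
  show ?thesis
  proof (rule is_pullbackI[OF b k c[folded P_def Q_def] d bc])
    fix W \<alpha> \<beta> assume \<alpha>: "\<alpha> \<in> hom C W P" and \<beta>: "\<beta> \<in> hom C W E"
      and eq: "b \<cdot> \<alpha> = k \<cdot> \<beta>"
    have "g \<cdot> (a \<cdot> \<alpha>) = (h \<cdot> k) \<cdot> \<beta>"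
      using comp_assoc[OF \<alpha> a g] comp_assoc[OF \<alpha> b h] comp_assoc[OF \<beta> k h]
        pullback_commutes[OF right] eq by simp
    then obtain w where w: "w \<in> hom C W Q" "e \<cdot> w = a \<cdot> \<alpha>" "d \<cdot> w = \<beta>"
      using pullback_lift[OF outer g comp_hom[OF k h] comp_hom[OF \<alpha> a] \<beta>] Q_def by auto
    have cw: "c \<cdot> w \<in> hom C W P" using comp_hom[OF w(1) c[folded P_def Q_def]] .
    have "c \<cdot> w = \<alpha>"
    proof (rule pullback_lift_unique[OF right, of _ W])
      show "c \<cdot> w \<in> hom C W (Dom C a)" "\<alpha> \<in> hom C W (Dom C a)" using cw \<alpha> P_def by auto
      show "a \<cdot> (c \<cdot> w) = a \<cdot> \<alpha>"
        using comp_assoc[OF w(1) c[folded P_def Q_def] a] ac w(2) by simp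
      show "b \<cdot> (c \<cdot> w) = b \<cdot> \<alpha>"
        using comp_assoc[OF w(1) c[folded P_def Q_def] b] comp_assoc[OF w(1) d k] bc w(3) eq by simp
    qed
    then show "\<exists>w \<in> hom C W Q. c \<cdot> w = \<alpha> \<and> d \<cdot> w = \<beta>" using w by auto
  next
    fix W w w' assume w: "w \<in> hom C W Q" and w': "w' \<in> hom C W Q"
      and eq1: "c \<cdot> w = c \<cdot> w'" and eq2: "d \<cdot> w = d \<cdot> w'"
    have "e \<cdot> w = e \<cdot> w'"
      using comp_assoc[OF w c[folded P_def Q_def] a] comp_assoc[OF w' c[folded P_def Q_def] a] ac eq1
      by simp
    then show "w = w'"
      using pullback_lift_unique[OF outer, of w W w'] w w' eq2 Q_def outer
      by (auto simp: is_pullback_def)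
  qed
qed

lemma mono_cancel:
  "mono C m \<Longrightarrow> m \<in> hom C c b \<Longrightarrow> g \<in> hom C w c \<Longrightarrow> h \<in> hom C w c \<Longrightarrow>
    m \<cdot> g = m \<cdot> h \<Longrightarrow> g = h"
  unfolding mono_def hom_def by auto

lemma pullback_of_mono:
  assumes pb: "is_pullback C g m p1 p2" and m: "mono C m"
  shows "mono C p1"
  unfolding mono_def
proof (intro conjI ballI impI)
  show "p1 \<in> Ar C" using pb by (simp add: is_pullback_def)
  fix a b assume "a \<in> Ar C" "b \<in> Ar C" "Dom C a = Dom C b"
    "Cod C a = Dom C p1" "Cod C b = Dom C p1" and eq: "p1 \<cdot> a = p1 \<cdot> b"
  then have a: "a \<in> hom C (Dom C a) (Dom C p1)" and b: "b \<in> hom C (Dom C a) (Dom C p1)"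
    by (auto simp: hom_def)
  have p1: "p1 \<in> hom C (Dom C p1) (Dom C g)" and p2: "p2 \<in> hom C (Dom C p1) (Dom C m)"
    and g: "g \<in> hom C (Dom C g) (Cod C g)" and m': "m \<in> hom C (Dom C m) (Cod C g)"
    using pb unfolding is_pullback_def hom_def by auto
  have "m \<cdot> (p2 \<cdot> a) = m \<cdot> (p2 \<cdot> b)"
    using comp_assoc[OF a p2 m'] comp_assoc[OF b p2 m'] comp_assoc[OF a p1 g] comp_assoc[OF b p1 g]
      pullback_commutes[OF pb] eq by simp
  then have "p2 \<cdot> a = p2 \<cdot> b" by (rule mono_cancel[OF m m' comp_hom[OF a p2] comp_hom[OF b p2]])
  then show "a = b" using pullback_lift_unique[OF pb a b eq] by simp
qed

lemma kernel_pair_diagonal: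
  assumes kp: "is_pullback C y y r1 r2" and y: "y \<in> hom C Y Y'"
  obtains \<delta> where "split_epi C r2 \<delta> (Dom C r1) Y" "r1 \<cdot> \<delta> = Idt C Y"
proof -
  obtain \<delta> where "\<delta> \<in> hom C Y (Dom C r1)" "r1 \<cdot> \<delta> = Idt C Y" "r2 \<cdot> \<delta> = Idt C Y"
    using pullback_lift[OF kp y y id_hom id_hom] hom_objects[OF y] by blast
  then show thesis
    using that pullback_proj_homs(2)[OF kp y y] unfolding split_epi_def by blast
qed

text \<open>By pasting, the domain \<open>X \<times>\<^bsub>X'\<^esub> P\<close> of \<open>q1, q2\<close> is \<open>X \<times>\<^bsub>Y'\<^esub> Y\<close>, hence also the
  pullback \<open>X \<times>\<^bsub>Y\<^esub> R\<close> of \<open>f\<close> along \<open>r2\<close>, where \<open>R\<close> is the kernel pair of \<open>y\<close>.\<close>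

lemma pullback_along_kernel_pair:
  assumes P: "is_pullback C y f' p1 p2" and Q: "is_pullback C p2 x q1 q2"
    and R: "is_pullback C y y r1 r2"
    and f: "f \<in> hom C X Y" and x: "x \<in> hom C X X'" and y: "y \<in> hom C Y Y'"
    and f': "f' \<in> hom C X' Y'" and square: "f' \<cdot> x = y \<cdot> f"
  obtains \<rho> where "\<rho> \<in> hom C (Dom C q1) (Dom C r1)" "r1 \<cdot> \<rho> = p1 \<cdot> q1"
    and "is_pullback C r2 f \<rho> q2"
proof -
  have p: "p1 \<in> hom C (Dom C p1) Y" "p2 \<in> hom C (Dom C p1) X'"
    using pullback_proj_homs[OF P y f'] by auto
  have q: "q1 \<in> hom C (Dom C q1) (Dom C p1)" "q2 \<in> hom C (Dom C q1) X"
    using pullback_proj_homs[OF Q p(2) x] by auto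
  have outer: "is_pullback C y (y \<cdot> f) (p1 \<cdot> q1) q2"
    using pullback_paste[OF P Q y f' x] square by simp
  have "y \<cdot> (p1 \<cdot> q1) = y \<cdot> (f \<cdot> q2)"
    using pullback_commutes[OF outer] comp_assoc[OF q(2) f y] by simp
  then obtain \<rho> where \<rho>: "\<rho> \<in> hom C (Dom C q1) (Dom C r1)" "r1 \<cdot> \<rho> = p1 \<cdot> q1" "r2 \<cdot> \<rho> = f \<cdot> q2"
    using pullback_lift[OF R y y comp_hom[OF q(1) p(1)] comp_hom[OF q(2) f]] by blast
  have "is_pullback C r2 f \<rho> q2"
    using pullback_cancel[OF R outer y y f _ \<rho>(2,3)] \<rho>(1) comp_hom[OF q(1) p(1)] by (simp add: hom_def)
  then show thesis using that \<rho>(1,2) by blast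
qed

lemma sigma_maltsev_jointly_extremally_epic:
  assumes maltsev: "sigma_maltsev C \<Sigma>" and "(f, s) \<in> \<Sigma>"
    and fs: "split_epi C f s X Y" and gt: "split_epi C g t Y' Y" and pb: "is_pullback C g f p1 p2"
  obtains \<sigma> \<tau> where "\<sigma> \<in> hom C Y' (Dom C p1)" "p1 \<cdot> \<sigma> = Idt C Y'" "p2 \<cdot> \<sigma> = s \<cdot> g"
    and "\<tau> \<in> hom C X (Dom C p1)" "p1 \<cdot> \<tau> = t \<cdot> f" "p2 \<cdot> \<tau> = Idt C X"
    and "jointly_extremally_epic C \<sigma> \<tau>"
proof -
  have f: "f \<in> hom C X Y" and s: "s \<in> hom C Y X" and "f \<cdot> s = Idt C Y"
    using fs unfolding split_epi_def by auto
  have g: "g \<in> hom C Y' Y" and t: "t \<in> hom C Y Y'" and "g \<cdot> t = Idt C Y"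
    using gt unfolding split_epi_def by auto
  have "g \<cdot> Idt C Y' = f \<cdot> (s \<cdot> g)"
    using comp_id_right[OF g] comp_assoc[OF g s f] \<open>f \<cdot> s = Idt C Y\<close> comp_id_left[OF g] by simp
  then obtain \<sigma> where \<sigma>: "\<sigma> \<in> hom C Y' (Dom C p1)" "p1 \<cdot> \<sigma> = Idt C Y'" "p2 \<cdot> \<sigma> = s \<cdot> g"
    using pullback_lift[OF pb g f id_hom comp_hom[OF g s]] hom_objects[OF g] by blast
  have "g \<cdot> (t \<cdot> f) = f \<cdot> Idt C X"
    using comp_assoc[OF f t g] \<open>g \<cdot> t = Idt C Y\<close> comp_id_left[OF f] comp_id_right[OF f] by simp
  then obtain \<tau> where \<tau>: "\<tau> \<in> hom C X (Dom C p1)" "p1 \<cdot> \<tau> = t \<cdot> f" "p2 \<cdot> \<tau> = Idt C X"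
    using pullback_lift[OF pb g f comp_hom[OF f t] id_hom] hom_objects[OF f] by blast
  show thesis
    using that[OF \<sigma> \<tau>] maltsev \<open>(f, s) \<in> \<Sigma>\<close> fs gt pb \<sigma> \<tau> unfolding sigma_maltsev_def by blast
qed

lemma sections_factor_through_comparison:
  assumes P: "is_pullback C y f' p1 p2" and Q: "is_pullback C p2 x q1 q2"
    and R: "is_pullback C y y r1 r2"
    and f: "f \<in> hom C X Y" and s: "s \<in> hom C Y X" and x: "x \<in> hom C X X'" and y: "y \<in> hom C Y Y'"
    and f': "f' \<in> hom C X' Y'" and s': "s' \<in> hom C Y' X'"
    and fs: "f \<cdot> s = Idt C Y" and section_square: "x \<cdot> s = s' \<cdot> y"
    and u: "u \<in> hom C X (Dom C p1)" and p1u: "p1 \<cdot> u = f" and p2u: "p2 \<cdot> u = x"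
    and \<rho>: "\<rho> \<in> hom C (Dom C q1) (Dom C r1)" "r1 \<cdot> \<rho> = p1 \<cdot> q1"
    and \<delta>: "\<delta> \<in> hom C Y (Dom C r1)" "r1 \<cdot> \<delta> = Idt C Y"
    and \<sigma>: "\<sigma> \<in> hom C (Dom C r1) (Dom C q1)" "\<rho> \<cdot> \<sigma> = Idt C (Dom C r1)" "q2 \<cdot> \<sigma> = s \<cdot> r2"
    and \<tau>: "\<tau> \<in> hom C X (Dom C q1)" "\<rho> \<cdot> \<tau> = \<delta> \<cdot> f" "q2 \<cdot> \<tau> = Idt C X"
  shows "q1 \<cdot> \<sigma> = u \<cdot> (s \<cdot> r1)" and "q1 \<cdot> \<tau> = u"
proof -
  have p: "p1 \<in> hom C (Dom C p1) Y" "p2 \<in> hom C (Dom C p1) X'"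
    using pullback_proj_homs[OF P y f'] by auto
  have r: "r1 \<in> hom C (Dom C r1) Y" "r2 \<in> hom C (Dom C r1) Y"
    using pullback_proj_homs[OF R y y] by auto
  have q: "q1 \<in> hom C (Dom C q1) (Dom C p1)" "q2 \<in> hom C (Dom C q1) X"
    using pullback_proj_homs[OF Q p(2) x] by auto
  show "q1 \<cdot> \<sigma> = u \<cdot> (s \<cdot> r1)"
  proof (rule pullback_lift_unique[OF P comp_hom[OF \<sigma>(1) q(1)] comp_hom[OF comp_hom[OF r(1) s] u]])
    have "p1 \<cdot> (q1 \<cdot> \<sigma>) = r1"
      using comp_assoc[OF \<sigma>(1) q(1) p(1)] comp_assoc[OF \<sigma>(1) \<rho>(1) r(1)] \<rho>(2) \<sigma>(2)
        comp_id_right[OF r(1)] by simp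
    also have "\<dots> = p1 \<cdot> (u \<cdot> (s \<cdot> r1))"
      using comp_assoc[OF comp_hom[OF r(1) s] u p(1)] p1u comp_assoc[OF r(1) s f] fs
        comp_id_left[OF r(1)] by simp
    finally show "p1 \<cdot> (q1 \<cdot> \<sigma>) = p1 \<cdot> (u \<cdot> (s \<cdot> r1))" .
    have "p2 \<cdot> (q1 \<cdot> \<sigma>) = (x \<cdot> s) \<cdot> r2"
      using comp_assoc[OF \<sigma>(1) q(1) p(2)] comp_assoc[OF \<sigma>(1) q(2) x] pullback_commutes[OF Q]
        \<sigma>(3) comp_assoc[OF r(2) s x] by simp
    also have "\<dots> = (x \<cdot> s) \<cdot> r1"
      using section_square comp_assoc[OF r(1) y s'] comp_assoc[OF r(2) y s'] pullback_commutes[OF R]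
      by simp
    also have "\<dots> = p2 \<cdot> (u \<cdot> (s \<cdot> r1))"
      using comp_assoc[OF comp_hom[OF r(1) s] u p(2)] p2u comp_assoc[OF r(1) s x] by simp
    finally show "p2 \<cdot> (q1 \<cdot> \<sigma>) = p2 \<cdot> (u \<cdot> (s \<cdot> r1))" .
  qed
  show "q1 \<cdot> \<tau> = u"
  proof (rule pullback_lift_unique[OF P comp_hom[OF \<tau>(1) q(1)] u])
    have "p1 \<cdot> (q1 \<cdot> \<tau>) = r1 \<cdot> (\<rho> \<cdot> \<tau>)"
      using comp_assoc[OF \<tau>(1) q(1) p(1)] comp_assoc[OF \<tau>(1) \<rho>(1) r(1)] \<rho>(2) by simp
    also have "\<dots> = f" using \<tau>(2) comp_assoc[OF f \<delta>(1) r(1)] \<delta>(2) comp_id_left[OF f] by simp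
    finally show "p1 \<cdot> (q1 \<cdot> \<tau>) = p1 \<cdot> u" using p1u by simp
    show "p2 \<cdot> (q1 \<cdot> \<tau>) = p2 \<cdot> u"
      using comp_assoc[OF \<tau>(1) q(1) p(2)] comp_assoc[OF \<tau>(1) q(2) x] pullback_commutes[OF Q]
        \<tau>(3) comp_id_right[OF x] p2u by simp
  qed
qed

lemma coequalizer_homs:
  assumes "is_coequalizer C u v q" "q \<in> hom C a b"
  shows "u \<in> hom C (Dom C u) a" "v \<in> hom C (Dom C u) a"
  using assms unfolding is_coequalizer_def hom_def by auto

lemma coequalizer_desc:
  assumes co: "is_coequalizer C u v q" and q: "q \<in> hom C a b"
    and h: "h \<in> hom C a c" and "h \<cdot> u = h \<cdot> v"
  shows "\<exists>!k. k \<in> hom C b c \<and> k \<cdot> q = h"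
proof -
  have "h \<in> Ar C" "Dom C h = Cod C u" "Cod C q = b" "Cod C h = c"
    using co q h unfolding is_coequalizer_def hom_def by auto
  then show ?thesis using co assms(4) unfolding is_coequalizer_def by metis
qed

lemma regular_epi_cancel:
  assumes r: "regular_epi C e" and e: "e \<in> hom C a b"
    and g: "g \<in> hom C b c" and h: "h \<in> hom C b c" and eq: "g \<cdot> e = h \<cdot> e"
  shows "g = h"
proof -
  obtain u v where co: "is_coequalizer C u v e" using r unfolding regular_epi_def by blast
  note uv = coequalizer_homs[OF co e]
  have "(g \<cdot> e) \<cdot> u = (g \<cdot> e) \<cdot> v"
    using comp_assoc[OF uv(1) e g] comp_assoc[OF uv(2) e g] co unfolding is_coequalizer_def by metis
  then show ?thesis using coequalizer_desc[OF co e comp_hom[OF e g]] g h eq by metis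
qed

lemma regular_epi_mono_iso:
  assumes r: "regular_epi C e" and e: "e \<in> hom C a b"
    and mono: "mono C m" and m: "m \<in> hom C c b" and k: "k \<in> hom C a c" and mk: "m \<cdot> k = e"
  shows "iso C m"
proof -
  obtain u v where co: "is_coequalizer C u v e" using r unfolding regular_epi_def by blast
  note uv = coequalizer_homs[OF co e]
  have "m \<cdot> (k \<cdot> u) = m \<cdot> (k \<cdot> v)"
    using comp_assoc[OF uv(1) k m] comp_assoc[OF uv(2) k m] mk co unfolding is_coequalizer_def by metis
  then have "k \<cdot> u = k \<cdot> v"
    using mono_cancel[OF mono m comp_hom[OF uv(1) k] comp_hom[OF uv(2) k]] by simp
  then obtain k' where k': "k' \<in> hom C b c" "k' \<cdot> e = k"
    using coequalizer_desc[OF co e k] by blast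
  have b: "b \<in> Ob C" and c: "c \<in> Ob C" using hom_objects[OF m] by auto
  have "(m \<cdot> k') \<cdot> e = Idt C b \<cdot> e"
    using comp_assoc[OF e k'(1) m] k'(2) mk comp_id_left[OF e] by simp
  then have right_inv: "m \<cdot> k' = Idt C b"
    using regular_epi_cancel[OF r e comp_hom[OF k'(1) m] id_hom[OF b]] by simp
  have "m \<cdot> (k' \<cdot> m) = m \<cdot> Idt C c"
    using comp_assoc[OF m k'(1) m] right_inv comp_id_left[OF m] comp_id_right[OF m] by simp
  then have left_inv: "k' \<cdot> m = Idt C c"
    using mono_cancel[OF mono m comp_hom[OF m k'(1)] id_hom[OF c]] by simp
  show ?thesis unfolding iso_def using m k'(1) left_inv right_inv by (auto simp: hom_def)
qed

lemma regular_epi_comp_iso: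
  assumes r: "regular_epi C q" and q: "q \<in> hom C a b" and iso: "iso C m" and m: "m \<in> hom C b c"
  shows "regular_epi C (m \<cdot> q)"
proof -
  obtain u v where co: "is_coequalizer C u v q" using r unfolding regular_epi_def by blast
  note uv = coequalizer_homs[OF co q]
  obtain m' where m': "m' \<in> hom C c b" "m' \<cdot> m = Idt C b" "m \<cdot> m' = Idt C c"
    using iso m unfolding iso_def hom_def by auto
  have mq: "m \<cdot> q \<in> hom C a c" using comp_hom[OF q m] .
  have "is_coequalizer C u v (m \<cdot> q)"
    unfolding is_coequalizer_def
  proof (intro conjI ballI impI)
    show "(m \<cdot> q) \<cdot> u = (m \<cdot> q) \<cdot> v"
      using comp_assoc[OF uv(1) q m] comp_assoc[OF uv(2) q m] co unfolding is_coequalizer_def by metis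
    fix h assume "h \<in> Ar C" "Dom C h = Cod C u" "h \<cdot> u = h \<cdot> v"
    then obtain k where k: "k \<in> hom C b (Cod C h)" "k \<cdot> q = h"
      using coequalizer_desc[OF co q, of h "Cod C h"] uv by (auto simp: hom_def)
    have km': "k \<cdot> m' \<in> hom C c (Cod C h)" using comp_hom[OF m'(1) k(1)] .
    show "\<exists>!k'. k' \<in> hom C (Cod C (m \<cdot> q)) (Cod C h) \<and> k' \<cdot> (m \<cdot> q) = h"
    proof (rule ex1I[where a = "k \<cdot> m'"])
      show "k \<cdot> m' \<in> hom C (Cod C (m \<cdot> q)) (Cod C h) \<and> (k \<cdot> m') \<cdot> (m \<cdot> q) = h"
        using km' mq comp_assoc[OF q m km'] comp_assoc[OF m m'(1) k(1)] m'(2) comp_id_right[OF k(1)] k(2)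
        by (simp add: hom_def)
    next
      fix k' assume "k' \<in> hom C (Cod C (m \<cdot> q)) (Cod C h) \<and> k' \<cdot> (m \<cdot> q) = h"
      then have k'c: "k' \<in> hom C c (Cod C h)" and k'mq: "k' \<cdot> (m \<cdot> q) = h"
        using mq by (auto simp: hom_def)
      have "(k' \<cdot> m) \<cdot> q = k \<cdot> q" using comp_assoc[OF q m k'c] k'mq k(2) by simp
      then have "k' \<cdot> m = k" using regular_epi_cancel[OF r q comp_hom[OF m k'c] k(1)] by simp
      then show "k' = k \<cdot> m'" using comp_assoc[OF m'(1) m k'c] m'(3) comp_id_right[OF k'c] by simp
    qed
  qed (use co mq uv in \<open>auto simp: is_coequalizer_def hom_def\<close>)
  then show ?thesis unfolding regular_epi_def by blast
qed

end

locale elementary_regular_category = elementary_category +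
  assumes regular: "regular_category C"
begin

lemma pullback_exists:
  assumes "f \<in> hom C A Z" "g \<in> hom C B Z"
  obtains p1 p2 where "is_pullback C f g p1 p2"
proof -
  have "f \<in> Ar C" "g \<in> Ar C" "Cod C f = Cod C g" using assms by (auto simp: hom_def)
  then show thesis
    using that regular unfolding regular_category_def finitely_complete_def has_pullbacks_def by blast
qed

lemma regular_epi_pullback: "is_pullback C f g p1 p2 \<Longrightarrow> regular_epi C g \<Longrightarrow> regular_epi C p1"
  using regular unfolding regular_category_def by blast

lemma regular_epi_cover_of_pullback:
  assumes q: "q \<in> hom C X I" "regular_epi C q" and g: "g \<in> hom C W I"
  obtains A e g' where "e \<in> hom C A W" "g' \<in> hom C A X" "regular_epi C e" "g \<cdot> e = q \<cdot> g'"
proof -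
  obtain e g' where pb: "is_pullback C g q e g'" using pullback_exists[OF g q(1)] .
  show thesis
    using that[OF pullback_proj_homs[OF pb g q(1)] regular_epi_pullback[OF pb q(2)]
        pullback_commutes[OF pb]] .
qed

lemma kernel_pair_coequalizer_factor_mono:
  assumes kp: "is_pullback C u u k1 k2" and co: "is_coequalizer C k1 k2 q"
    and u: "u \<in> hom C X P" and q: "q \<in> hom C X I" and m: "m \<in> hom C I P" and mq: "m \<cdot> q = u"
  shows "mono C m"
  unfolding mono_def
proof (intro conjI ballI impI)
  show "m \<in> Ar C" using m by (simp add: hom_def)
  fix g h assume "g \<in> Ar C" "h \<in> Ar C" "Dom C g = Dom C h"
    "Cod C g = Dom C m" "Cod C h = Dom C m" and eq: "m \<cdot> g = m \<cdot> h"
  then have g: "g \<in> hom C (Dom C g) I" and h: "h \<in> hom C (Dom C g) I"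
    using m by (auto simp: hom_def)
  have rq: "regular_epi C q" using co unfolding regular_epi_def by blast
  \<comment> \<open>Lift \<open>g\<close> and \<open>h\<close> along \<open>q\<close> after precomposing with a regular epimorphic cover;
    the lifts are equalised by \<open>u\<close>, hence by \<open>q\<close>.\<close>
  obtain A e g' where e: "e \<in> hom C A (Dom C g)" "g' \<in> hom C A X" "regular_epi C e"
    and ge: "g \<cdot> e = q \<cdot> g'"
    using regular_epi_cover_of_pullback[OF q rq g] .
  obtain B e' h' where e': "e' \<in> hom C B A" "h' \<in> hom C B X" "regular_epi C e'"
    and he: "(h \<cdot> e) \<cdot> e' = q \<cdot> h'"
    using regular_epi_cover_of_pullback[OF q rq comp_hom[OF e(1) h]] .
  have ge': "(g \<cdot> e) \<cdot> e' = q \<cdot> (g' \<cdot> e')"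
    using comp_assoc[OF e'(1) e(2) q] ge by simp
  have "u \<cdot> (g' \<cdot> e') = u \<cdot> h'"
  proof -
    have "u \<cdot> (g' \<cdot> e') = m \<cdot> ((g \<cdot> e) \<cdot> e')"
      using comp_assoc[OF comp_hom[OF e'(1) e(2)] q m] mq ge' by simp
    also have "\<dots> = m \<cdot> ((h \<cdot> e) \<cdot> e')"
      using comp_assoc[OF comp_hom[OF e'(1) e(1)] g m] comp_assoc[OF comp_hom[OF e'(1) e(1)] h m]
        comp_assoc[OF e'(1) e(1) g] comp_assoc[OF e'(1) e(1) h] eq by simp
    also have "\<dots> = u \<cdot> h'" using comp_assoc[OF e'(2) q m] mq he by simp
    finally show ?thesis .
  qed
  then obtain w where w: "w \<in> hom C B (Dom C k1)" "k1 \<cdot> w = g' \<cdot> e'" "k2 \<cdot> w = h'"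
    using pullback_lift[OF kp u u comp_hom[OF e'(1) e(2)] e'(2)] by blast
  note k = pullback_proj_homs[OF kp u u]
  have "(g \<cdot> e) \<cdot> e' = (h \<cdot> e) \<cdot> e'"
    using ge' he w comp_assoc[OF w(1) k(1) q] comp_assoc[OF w(1) k(2) q] co
    unfolding is_coequalizer_def by (metis (no_types))
  then have "g \<cdot> e = h \<cdot> e"
    using regular_epi_cancel[OF e'(3,1) comp_hom[OF e(1) g] comp_hom[OF e(1) h]] by simp
  then show "g = h" using regular_epi_cancel[OF e(3,1) g h] by simp
qed

lemma image_factorization:
  assumes u: "u \<in> hom C X P"
  obtains I q m where "q \<in> hom C X I" "m \<in> hom C I P" "regular_epi C q" "mono C m" "m \<cdot> q = u"
proof -
  obtain k1 k2 where kp: "is_pullback C u u k1 k2" using pullback_exists[OF u u] .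
  then obtain q where co: "is_coequalizer C k1 k2 q"
    using regular u unfolding regular_category_def hom_def by blast
  note k = pullback_proj_homs[OF kp u u]
  have q: "q \<in> hom C X (Cod C q)" using co k unfolding is_coequalizer_def hom_def by auto
  obtain m where m: "m \<in> hom C (Cod C q) P" "m \<cdot> q = u"
    using coequalizer_desc[OF co q u] pullback_commutes[OF kp] by blast
  show thesis
    using that[OF q m(1)] kernel_pair_coequalizer_factor_mono[OF kp co u q m] m(2) co
    unfolding regular_epi_def by blast
qed

lemma jointly_extremally_epic_factor_through_mono:
  assumes jee: "jointly_extremally_epic C a b" and a: "a \<in> hom C A Q" and b: "b \<in> hom C B Q"
    and h: "h \<in> hom C Q P" and mono: "mono C m" and m: "m \<in> hom C I P"
    and a': "a' \<in> hom C A I" "h \<cdot> a = m \<cdot> a'" and b': "b' \<in> hom C B I" "h \<cdot> b = m \<cdot> b'"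
  obtains n where "n \<in> hom C Q I" "m \<cdot> n = h"
proof -
  obtain m' n where pb: "is_pullback C h m m' n" using pullback_exists[OF h m] .
  define M where "M = Dom C m'"
  have m': "m' \<in> hom C M Q" and n: "n \<in> hom C M I"
    using pullback_proj_homs[OF pb h m] M_def by auto
  obtain a'' where a'': "a'' \<in> hom C A M" "m' \<cdot> a'' = a"
    using pullback_lift[OF pb h m a a'] M_def by blast
  obtain b'' where b'': "b'' \<in> hom C B M" "m' \<cdot> b'' = b"
    using pullback_lift[OF pb h m b b'] M_def by blast
  have "iso C m'"
    using jee pullback_of_mono[OF pb mono] m' a a'' b b''
    unfolding jointly_extremally_epic_def by (auto simp: hom_def)
  then obtain m'' where m'': "m'' \<in> hom C Q M" "m' \<cdot> m'' = Idt C Q"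
    using m' unfolding iso_def hom_def by auto
  have "m \<cdot> (n \<cdot> m'') = h"
    using comp_assoc[OF m''(1) n m] pullback_commutes[OF pb] comp_assoc[OF m''(1) m' h] m''(2)
      comp_id_right[OF h] by simp
  then show thesis using that comp_hom[OF m''(1) n] by blast
qed

lemma regular_epi_of_jointly_extremally_epic_cover:
  assumes u: "u \<in> hom C X P" and e: "e \<in> hom C Q P" "regular_epi C e"
    and jee: "jointly_extremally_epic C a b" and a: "a \<in> hom C A Q" and b: "b \<in> hom C B Q"
    and a': "a' \<in> hom C A X" "e \<cdot> a = u \<cdot> a'" and b': "b' \<in> hom C B X" "e \<cdot> b = u \<cdot> b'"
  shows "regular_epi C u"
proof -
  obtain I q m where q: "q \<in> hom C X I" "regular_epi C q" and m: "m \<in> hom C I P" "mono C m"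
    and mq: "m \<cdot> q = u"
    using image_factorization[OF u] by blast
  have "e \<cdot> a = m \<cdot> (q \<cdot> a')" "e \<cdot> b = m \<cdot> (q \<cdot> b')"
    using comp_assoc[OF a'(1) q(1) m(1)] comp_assoc[OF b'(1) q(1) m(1)] a'(2) b'(2) mq by simp_all
  then obtain n where "n \<in> hom C Q I" "m \<cdot> n = e"
    using jointly_extremally_epic_factor_through_mono[OF jee a b e(1) m(2,1)]
      comp_hom[OF a'(1) q(1)] comp_hom[OF b'(1) q(1)] by blast
  then have "iso C m" using regular_epi_mono_iso[OF e(2,1) m(2,1)] by blast
  then show ?thesis using regular_epi_comp_iso[OF q(2,1) _ m(1)] mq by simp
qed

end

theorem proposition7p6:
  fixes C :: "('o, 'a) cat" and \<Sigma> :: "('a \<times> 'a) set"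
    and f s f' s' x y :: 'a and X Y X' Y' :: 'o
  assumes regular: "regular_category C"
    and "fibrational C \<Sigma>"
    and maltsev: "sigma_maltsev C \<Sigma>"
    and fs: "split_epi C f s X Y"
    and f's': "split_epi C f' s' X' Y'"
    and x: "x \<in> hom C X X'" and "regular_epi C x"
    and y: "y \<in> hom C Y Y'" and "regular_epi C y"
    and square: "Comp C f' x = Comp C y f"
    and section_square: "Comp C x s = Comp C s' y"
    and "(f, s) \<in> \<Sigma>"
  shows "\<forall>p1 p2 u. is_pullback C y f' p1 p2 \<longrightarrow>
           u \<in> hom C X (Dom C p1) \<longrightarrow> Comp C p1 u = f \<longrightarrow> Comp C p2 u = x \<longrightarrow>
           regular_epi C u"
proof (intro allI impI)
  fix p1 p2 u
  assume P: "is_pullback C y f' p1 p2" and u: "u \<in> hom C X (Dom C p1)"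
    and p1u: "Comp C p1 u = f" and p2u: "Comp C p2 u = x"
  interpret elementary_regular_category C
    using regular by unfold_locales (simp_all add: regular_category_def)
  have f: "f \<in> hom C X Y" and s: "s \<in> hom C Y X" and "f \<cdot> s = Idt C Y"
    using fs unfolding split_epi_def by auto
  have f': "f' \<in> hom C X' Y'" and s': "s' \<in> hom C Y' X'"
    using f's' unfolding split_epi_def by auto
  have p: "p1 \<in> hom C (Dom C p1) Y" "p2 \<in> hom C (Dom C p1) X'"
    using pullback_proj_homs[OF P y f'] by auto
  obtain r1 r2 where R: "is_pullback C y y r1 r2" using pullback_exists[OF y y] .
  have r: "r1 \<in> hom C (Dom C r1) Y" "r2 \<in> hom C (Dom C r1) Y"
    using pullback_proj_homs[OF R y y] by auto
  obtain \<delta> where \<delta>: "split_epi C r2 \<delta> (Dom C r1) Y" "r1 \<cdot> \<delta> = Idt C Y"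
    using kernel_pair_diagonal[OF R y] .
  obtain q1 q2 where Q: "is_pullback C p2 x q1 q2" using pullback_exists[OF p(2) x] .
  have q: "q1 \<in> hom C (Dom C q1) (Dom C p1)" "q2 \<in> hom C (Dom C q1) X"
    using pullback_proj_homs[OF Q p(2) x] by auto
  obtain \<rho> where \<rho>: "\<rho> \<in> hom C (Dom C q1) (Dom C r1)" "r1 \<cdot> \<rho> = p1 \<cdot> q1"
    and Q': "is_pullback C r2 f \<rho> q2"
    using pullback_along_kernel_pair[OF P Q R f x y f' square] .
  have "Dom C \<rho> = Dom C q1" using \<rho>(1) by (simp add: hom_def)
  then obtain \<sigma> \<tau> where \<sigma>: "\<sigma> \<in> hom C (Dom C r1) (Dom C q1)" "\<rho> \<cdot> \<sigma> = Idt C (Dom C r1)"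
      "q2 \<cdot> \<sigma> = s \<cdot> r2"
    and \<tau>: "\<tau> \<in> hom C X (Dom C q1)" "\<rho> \<cdot> \<tau> = \<delta> \<cdot> f" "q2 \<cdot> \<tau> = Idt C X"
    and jee: "jointly_extremally_epic C \<sigma> \<tau>"
    using sigma_maltsev_jointly_extremally_epic[OF maltsev \<open>(f, s) \<in> \<Sigma>\<close> fs \<delta>(1) Q'] by metis
  have \<delta>h: "\<delta> \<in> hom C Y (Dom C r1)" using \<delta>(1) unfolding split_epi_def by simp
  note factors = sections_factor_through_comparison[OF P Q R f s x y f' s' \<open>f \<cdot> s = Idt C Y\<close>
      section_square u p1u p2u \<rho> \<delta>h \<delta>(2) \<sigma> \<tau>]
  show "regular_epi C u"
    using regular_epi_of_jointly_extremally_epic_cover[OF u q(1) regular_epi_pullback[OF Q \<open>regular_epi C x\<close>]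
        jee \<sigma>(1) \<tau>(1) comp_hom[OF r(1) s] factors(1) id_hom] hom_objects[OF f] factors(2)
      comp_id_right[OF u] by simp
qed

end
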